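(* Let $X$ be a Banach space and $\{L(t,\tau):t\geqslant\tau\}\subset\mathcal L(X)$ a linear evolution process having exponential splitting with constant $M\geqslant1$, exponents $\gamma>\rho$ and projections $\{Q(t):t\in\mathbb R\}$, and also having exponential splitting with constant $M_*\geqslant1$, exponents $\gamma_*>\rho_*$ with $\gamma>\gamma_*$, and projections $\{Q_*(t):t\in\mathbb R\}$. Then $\mathrm{Im}(Q_*(t))\subset\mathrm{Im}(Q(t))$ and $\mathrm{Ker}(Q(t))\subset\mathrm{Ker}(Q_*(t))$ for all $t\in\mathbb R$.
   Context: A linear evolution process is a family $\{L(t,\tau):t\geqslant\tau\}\subset\mathcal L(X)$ with $L(t,t)=I$, $L(t,s)L(s,\tau)=L(t,\tau)$ for $t\geqslant s\geqslant\tau$ and $t\mapsto L(t,\tau)u$ continuous. It has exponential splitting with constant $M\geqslant1$, exponents $\gamma>\rho$ and projections $\{Q(t)\}\subset\mathcal L(X)$ if $Q(t)L(t,\tau)=L(t,\tau)Q(\tau)$ for $t\geqslant\tau$, $L(t,\tau):\mathrm{Im}Q(\tau)\to\mathrm{Im}Q(t)$ is an isomorphism (inverse denoted $L(\tau,t)$), $\|L(t,\tau)Q(\tau)\|\leqslant Me^{-\rho(t-\tau)}$ for $t\leqslant\tau$ and $\|L(t,\tau)(I-Q(\tau))\|\leqslant Me^{-\gamma(t-\tau)}$ for $t\geqslant\tau$. *)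

theory Defs
  imports "HOL-Analysis.Analysis"
begin

text \<open>A linear evolution process on a normed space: a family of bounded linear
  operators L t tau (meaningful for t \<ge> tau).\<close>
definition evolution_process :: "(real \<Rightarrow> real \<Rightarrow> ('a::real_normed_vector \<Rightarrow>\<^sub>L 'a)) \<Rightarrow> bool" where
  "evolution_process L \<longleftrightarrow>
     (\<forall>t. L t t = id_blinfun) \<and>
     (\<forall>t s \<tau>. \<tau> \<le> s \<and> s \<le> t \<longrightarrow> L t s o\<^sub>L L s \<tau> = L t \<tau>) \<and>
     (\<forall>\<tau> u. continuous_on {\<tau>..} (\<lambda>t. L t \<tau> u))"

text \<open>For t \<ge> tau, back_op L Q tau t is the inverse L(tau,t) of the restriction
  of L t tau to Im Q(tau), mapping Im Q(t) back to Im Q(tau).\<close>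
definition back_op :: "(real \<Rightarrow> real \<Rightarrow> ('a::real_normed_vector \<Rightarrow>\<^sub>L 'a)) \<Rightarrow> (real \<Rightarrow> ('a \<Rightarrow>\<^sub>L 'a))
    \<Rightarrow> real \<Rightarrow> real \<Rightarrow> 'a \<Rightarrow> 'a" where
  "back_op L Q \<tau> t = the_inv_into (range (blinfun_apply (Q \<tau>))) (blinfun_apply (L t \<tau>))"

definition exponential_splitting ::
  "(real \<Rightarrow> real \<Rightarrow> ('a::real_normed_vector \<Rightarrow>\<^sub>L 'a)) \<Rightarrow> real \<Rightarrow> real \<Rightarrow> real \<Rightarrow> (real \<Rightarrow> ('a \<Rightarrow>\<^sub>L 'a)) \<Rightarrow> bool" where
  "exponential_splitting L M \<gamma> \<rho> Q \<longleftrightarrow>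
     M \<ge> 1 \<and> \<gamma> > \<rho> \<and>
     (\<forall>t. Q t o\<^sub>L Q t = Q t) \<and>
     (\<forall>t \<tau>. \<tau> \<le> t \<longrightarrow> Q t o\<^sub>L L t \<tau> = L t \<tau> o\<^sub>L Q \<tau>) \<and>
     (\<forall>t \<tau>. \<tau> \<le> t \<longrightarrow> bij_betw (blinfun_apply (L t \<tau>)) (range (blinfun_apply (Q \<tau>))) (range (blinfun_apply (Q t)))) \<and>
     (\<forall>t \<tau> x. t \<le> \<tau> \<longrightarrow> norm (back_op L Q t \<tau> (Q \<tau> x)) \<le> M * exp (-\<rho> * (t - \<tau>)) * norm x) \<and>
     (\<forall>t \<tau>. \<tau> \<le> t \<longrightarrow> norm (L t \<tau> o\<^sub>L (id_blinfun - Q \<tau>)) \<le> M * exp (-\<gamma> * (t - \<tau>)))"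

end

theory Submission
  imports Defs "HOL-Real_Asymp.Real_Asymp"
begin

text \<open>If \<open>Q(t) x = 0\<close>, then \<open>L(s,t) x\<close> decays at rate \<open>\<gamma>\<close>, so the forward orbit of
  \<open>y = Q\<^sub>s(t) x = x - (I - Q\<^sub>s(t)) x\<close> decays at rate at least \<open>\<gamma>\<^sub>s\<close>; but forward orbits
  in \<open>Im Q\<^sub>s(t)\<close> shrink at rate at most \<open>\<rho>\<^sub>s < \<gamma>\<^sub>s\<close>, which forces \<open>y = 0\<close>.
  Dually, \<open>y \<in> Im Q\<^sub>s(t)\<close> has preimages \<open>w = L(r,t) y\<close> growing at rate at most \<open>\<rho>\<^sub>s\<close>
  as \<open>r \<rightarrow> -\<infinity>\<close>, while \<open>(I - Q(t)) y = L(t,r) (I - Q(r)) w\<close> gains the factor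
  \<open>exp (-\<gamma> (t - r))\<close>; since \<open>\<rho>\<^sub>s < \<gamma>\<close>, this gives \<open>Q(t) y = y\<close>.\<close>

lemma nonpos_if_exp_decay_bound:
  fixes a K c :: real
  assumes "c > 0" and bound: "\<And>d. d \<ge> 0 \<Longrightarrow> a \<le> K * exp (-c * d)"
  shows "a \<le> 0"
proof -
  have "((\<lambda>d. K * exp (-c * d)) \<longlongrightarrow> 0) at_top"
    using \<open>c > 0\<close> by real_asymp
  moreover have "eventually (\<lambda>d. a \<le> K * exp (-c * d)) at_top"
    using eventually_ge_at_top[of 0] by eventually_elim (rule bound)
  ultimately show ?thesis
    by (intro tendsto_le[OF trivial_limit_at_top_linorder _ tendsto_const])
qed

lemma exp_splitting_range_iff:
  assumes "exponential_splitting L M \<gamma> \<rho> Q"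
  shows "y \<in> range (blinfun_apply (Q t)) \<longleftrightarrow> Q t y = y"
proof
  assume "y \<in> range (blinfun_apply (Q t))"
  then obtain x where "y = Q t x" by auto
  with assms show "Q t y = y"
    unfolding exponential_splitting_def by (metis blinfun_apply_blinfun_compose)
qed (metis rangeI)

lemma exp_splitting_commute:
  assumes "exponential_splitting L M \<gamma> \<rho> Q" and "\<tau> \<le> t"
  shows "Q t (L t \<tau> x) = L t \<tau> (Q \<tau> x)"
  using assms unfolding exponential_splitting_def by (metis blinfun_apply_blinfun_compose)

lemma exp_splitting_complement_decay:
  assumes "exponential_splitting L M \<gamma> \<rho> Q" and "\<tau> \<le> t"
  shows "norm (L t \<tau> (x - Q \<tau> x)) \<le> M * exp (-\<gamma> * (t - \<tau>)) * norm x"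
proof -
  have "norm (L t \<tau> (x - Q \<tau> x)) = norm ((L t \<tau> o\<^sub>L (id_blinfun - Q \<tau>)) x)"
    by (simp add: blinfun.diff_left blinfun.diff_right)
  also have "\<dots> \<le> norm (L t \<tau> o\<^sub>L (id_blinfun - Q \<tau>)) * norm x"
    by (rule norm_blinfun)
  also have "\<dots> \<le> M * exp (-\<gamma> * (t - \<tau>)) * norm x"
    using assms unfolding exponential_splitting_def by (intro mult_right_mono) auto
  finally show ?thesis .
qed

lemma exp_splitting_back_op:
  assumes "exponential_splitting L M \<gamma> \<rho> Q" and "\<tau> \<le> t"
    and y: "y \<in> range (blinfun_apply (Q t))"
  shows "back_op L Q \<tau> t y \<in> range (blinfun_apply (Q \<tau>))"
    and "L t \<tau> (back_op L Q \<tau> t y) = y"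
    and "norm (back_op L Q \<tau> t y) \<le> M * exp (\<rho> * (t - \<tau>)) * norm y"
proof -
  have bij: "bij_betw (blinfun_apply (L t \<tau>)) (range (blinfun_apply (Q \<tau>))) (range (blinfun_apply (Q t)))"
    using assms unfolding exponential_splitting_def by blast
  show "back_op L Q \<tau> t y \<in> range (blinfun_apply (Q \<tau>))"
    unfolding back_op_def using bij y by (metis bij_betw_def subset_refl the_inv_into_into)
  show "L t \<tau> (back_op L Q \<tau> t y) = y"
    unfolding back_op_def using bij y by (rule f_the_inv_into_f_bij_betw)
  have "Q t y = y"
    using exp_splitting_range_iff[OF assms(1)] y by blast
  moreover have "norm (back_op L Q \<tau> t (Q t y)) \<le> M * exp (-\<rho> * (\<tau> - t)) * norm y"
    using assms unfolding exponential_splitting_def by blast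
  ultimately show "norm (back_op L Q \<tau> t y) \<le> M * exp (\<rho> * (t - \<tau>)) * norm y"
    by (simp add: algebra_simps)
qed

lemma exp_splitting_norm_le_on_range:
  assumes splitting: "exponential_splitting L M \<gamma> \<rho> Q" and "\<tau> \<le> t"
    and x: "x \<in> range (blinfun_apply (Q \<tau>))"
  shows "norm x \<le> M * exp (\<rho> * (t - \<tau>)) * norm (L t \<tau> x)"
proof -
  have "Q \<tau> x = x"
    using exp_splitting_range_iff[OF splitting] x by blast
  then have Lx: "L t \<tau> x \<in> range (blinfun_apply (Q t))"
    using exp_splitting_commute[OF assms(1,2)] by (metis rangeI)
  have "inj_on (blinfun_apply (L t \<tau>)) (range (blinfun_apply (Q \<tau>)))"
    using assms unfolding exponential_splitting_def bij_betw_def by blast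
  then have "back_op L Q \<tau> t (L t \<tau> x) = x"
    unfolding back_op_def using x by (rule the_inv_into_f_f)
  with exp_splitting_back_op(3)[OF assms(1,2) Lx] show ?thesis by simp
qed

lemma exp_splitting_kernel_subset:
  assumes splitting: "exponential_splitting L M \<gamma> \<rho> Q"
    and splitting\<^sub>s: "exponential_splitting L M\<^sub>s \<gamma>\<^sub>s \<rho>\<^sub>s Q\<^sub>s"
    and "\<gamma>\<^sub>s \<le> \<gamma>" and x: "Q t x = 0"
  shows "Q\<^sub>s t x = 0"
proof -
  define y where "y = Q\<^sub>s t x"
  have M_nonneg: "M \<ge> 0" "M\<^sub>s \<ge> 0" and "\<rho>\<^sub>s < \<gamma>\<^sub>s"
    using splitting splitting\<^sub>s unfolding exponential_splitting_def by auto
  have "norm y \<le> M\<^sub>s * (M + M\<^sub>s) * norm x * exp (-(\<gamma>\<^sub>s - \<rho>\<^sub>s) * d)" if "d \<ge> 0" for d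
  proof -
    define s where "s = t + d"
    have "t \<le> s" "s - t = d"
      using \<open>d \<ge> 0\<close> by (simp_all add: s_def)
    have "norm (L s t x) \<le> M * exp (-\<gamma> * d) * norm x"
      using exp_splitting_complement_decay[OF splitting \<open>t \<le> s\<close>, of x] x \<open>s - t = d\<close> by simp
    also have "\<dots> \<le> M * exp (-\<gamma>\<^sub>s * d) * norm x"
      using \<open>\<gamma>\<^sub>s \<le> \<gamma>\<close> \<open>d \<ge> 0\<close> M_nonneg by (intro mult_right_mono mult_left_mono) (auto simp: mult_right_mono)
    finally have decay_x: "norm (L s t x) \<le> M * exp (-\<gamma>\<^sub>s * d) * norm x" .
    have "L s t y = L s t x - L s t (x - Q\<^sub>s t x)"
      by (simp add: y_def blinfun.diff_right)
    then have "norm (L s t y) \<le> norm (L s t x) + norm (L s t (x - Q\<^sub>s t x))"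
      by (metis norm_triangle_ineq4)
    also have "\<dots> \<le> (M + M\<^sub>s) * exp (-\<gamma>\<^sub>s * d) * norm x"
      using decay_x exp_splitting_complement_decay[OF splitting\<^sub>s \<open>t \<le> s\<close>, of x] \<open>s - t = d\<close>
      by (simp add: algebra_simps)
    finally have decay_y: "norm (L s t y) \<le> (M + M\<^sub>s) * exp (-\<gamma>\<^sub>s * d) * norm x" .
    have "norm y \<le> M\<^sub>s * exp (\<rho>\<^sub>s * d) * norm (L s t y)"
      using exp_splitting_norm_le_on_range[OF splitting\<^sub>s \<open>t \<le> s\<close>, of y] \<open>s - t = d\<close>
      by (simp add: y_def)
    also have "\<dots> \<le> M\<^sub>s * exp (\<rho>\<^sub>s * d) * ((M + M\<^sub>s) * exp (-\<gamma>\<^sub>s * d) * norm x)"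
      using decay_y M_nonneg by (intro mult_left_mono) auto
    also have "\<dots> = M\<^sub>s * (M + M\<^sub>s) * norm x * exp (-(\<gamma>\<^sub>s - \<rho>\<^sub>s) * d)"
      by (simp add: algebra_simps flip: exp_add)
    finally show ?thesis .
  qed
  then have "norm y \<le> 0"
    using \<open>\<rho>\<^sub>s < \<gamma>\<^sub>s\<close> by (intro nonpos_if_exp_decay_bound[of "\<gamma>\<^sub>s - \<rho>\<^sub>s"]) auto
  then show ?thesis by (simp add: y_def)
qed

lemma exp_splitting_range_subset:
  assumes splitting: "exponential_splitting L M \<gamma> \<rho> Q"
    and splitting\<^sub>s: "exponential_splitting L M\<^sub>s \<gamma>\<^sub>s \<rho>\<^sub>s Q\<^sub>s"
    and "\<rho>\<^sub>s < \<gamma>" and y: "y \<in> range (blinfun_apply (Q\<^sub>s t))"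
  shows "y \<in> range (blinfun_apply (Q t))"
proof -
  define z where "z = y - Q t y"
  have M_nonneg: "M \<ge> 0" "M\<^sub>s \<ge> 0"
    using splitting splitting\<^sub>s unfolding exponential_splitting_def by auto
  have "norm z \<le> M * M\<^sub>s * norm y * exp (-(\<gamma> - \<rho>\<^sub>s) * d)" if "d \<ge> 0" for d
  proof -
    define r where "r = t - d"
    have "r \<le> t" "t - r = d"
      using \<open>d \<ge> 0\<close> by (simp_all add: r_def)
    define w where "w = back_op L Q\<^sub>s r t y"
    have Lw: "L t r w = y" and w_bound: "norm w \<le> M\<^sub>s * exp (\<rho>\<^sub>s * d) * norm y"
      using exp_splitting_back_op(2,3)[OF splitting\<^sub>s \<open>r \<le> t\<close> y] \<open>t - r = d\<close>
      by (simp_all add: w_def)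
    have "z = L t r (w - Q r w)"
      using exp_splitting_commute[OF splitting \<open>r \<le> t\<close>, of w] Lw
      by (simp add: z_def blinfun.diff_right)
    then have "norm z \<le> M * exp (-\<gamma> * d) * norm w"
      using exp_splitting_complement_decay[OF splitting \<open>r \<le> t\<close>, of w] \<open>t - r = d\<close> by simp
    also have "\<dots> \<le> M * exp (-\<gamma> * d) * (M\<^sub>s * exp (\<rho>\<^sub>s * d) * norm y)"
      using w_bound M_nonneg by (intro mult_left_mono) auto
    also have "\<dots> = M * M\<^sub>s * norm y * exp (-(\<gamma> - \<rho>\<^sub>s) * d)"
      by (simp add: algebra_simps flip: exp_add)
    finally show ?thesis .
  qed
  then have "norm z \<le> 0"
    using \<open>\<rho>\<^sub>s < \<gamma>\<close> by (intro nonpos_if_exp_decay_bound[of "\<gamma> - \<rho>\<^sub>s"]) auto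
  then show ?thesis
    by (metis z_def norm_le_zero_iff eq_iff_diff_eq_0 rangeI)
qed

theorem lemma3p3:
  fixes L :: "real \<Rightarrow> real \<Rightarrow> ('a::banach \<Rightarrow>\<^sub>L 'a)"
    and Q Q\<^sub>s :: "real \<Rightarrow> ('a \<Rightarrow>\<^sub>L 'a)"
    and M M\<^sub>s \<gamma> \<rho> \<gamma>\<^sub>s \<rho>\<^sub>s :: real
  assumes "evolution_process L"
    and "exponential_splitting L M \<gamma> \<rho> Q"
    and "exponential_splitting L M\<^sub>s \<gamma>\<^sub>s \<rho>\<^sub>s Q\<^sub>s"
    and "\<gamma> > \<gamma>\<^sub>s"
  shows "\<forall>t. range (blinfun_apply (Q\<^sub>s t)) \<subseteq> range (blinfun_apply (Q t)) \<and>
             {x. Q t x = 0} \<subseteq> {x. Q\<^sub>s t x = 0}"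
proof -
  have "\<rho>\<^sub>s < \<gamma>"
    using assms(3,4) unfolding exponential_splitting_def by auto
  then show ?thesis
    using exp_splitting_range_subset[OF assms(2,3)] exp_splitting_kernel_subset[OF assms(2,3)] assms(4)
    by auto
qed

end
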